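(* Let $N\ge 2$, let $s=(s_1,\dots,s_{N-1})\in\mathbb{C}^{N-1}$ be generic, and set $x_a=2s_a-2s_{a-1}$ for $1\le a\le N$, with $s_0=s_N=0$. Define $$F(s)=\mathbb{1}\otimes\mathbb{1}-\sum_{1\le a<b\le N}\frac{2}{x_a-x_b}\,E_{ab}\otimes E_{ba}\in \mathrm{End}(\mathbb{C}^N)^{\otimes 2},$$ and $R(s)=F_{21}(s)\,F_{12}(s)^{-1}$, where $F_{21}=PF_{12}P$ with $P$ the permutation of the two tensor factors. Then, writing $R(s)=\sum R_{i_1i_2}^{j_1j_2}E_{i_1j_1}\otimes E_{i_2j_2}$, the non-vanishing entries of $R(s)$ are, for $1\le a, b\le N$ with $a\neq b$ in the last two lines, $$R_{aa}^{aa}=1,\qquad R_{ab}^{ab}=\begin{cases}1 & b>a,\\ 1-\dfrac{4}{(x_a-x_b)^2} & b<a,\end{cases}\qquad R_{ab}^{ba}=\frac{2}{x_a-x_b},$$ and $R(s)$ satisfies the dynamical Yang--Baxter equation $$R_{12}(s+h^{(3)})\,R_{13}(s)\,R_{23}(s+h^{(1)})=R_{23}(s)\,R_{13}(s+h^{(2)})\,R_{12}(s)$$ in $\mathrm{End}(\mathbb{C}^N)^{\otimes 3}$.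
   Context: $E_{ab}$ denotes the $N\times N$ elementary matrix with entry $1$ in position $(a,b)$ and $0$ elsewhere; $R_{12},R_{13},R_{23}$ denote $R$ acting on the indicated factors of $(\mathbb{C}^N)^{\otimes 3}$. The shift notation: let $h_j=E_{jj}-E_{j+1,j+1}$ ($1\le j\le N-1$) be the Cartan generators of $sl_N$ in the fundamental representation, $(d_{ij})$ the inverse of the Cartan matrix of $sl_N$, and $h^\vee_i=\sum_j d_{ij}h_j$. Then $R_{12}(s+h^{(3)})$ means the operator obtained by replacing each $s_i$ in $R_{12}(s)$ by $s_i+h^\vee_i$ acting in the third tensor factor (these are diagonal, so this is well defined: on $v_{i_1}\otimes v_{i_2}\otimes v_c$ one substitutes the eigenvalue of $h^\vee_i$ on $v_c$); similarly for $h^{(1)}$, $h^{(2)}$. *)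

theory Defs
  imports Complex_Main
begin

definition cartan :: "nat \<Rightarrow> nat \<Rightarrow> real" where
  "cartan i j = (if i = j then 2 else if i = j + 1 \<or> j = i + 1 then -1 else 0)"

definition cartan_inv :: "nat \<Rightarrow> nat \<Rightarrow> nat \<Rightarrow> real" where
  "cartan_inv N = (THE d. (\<forall>i j. (i \<notin> {1..N-1} \<or> j \<notin> {1..N-1}) \<longrightarrow> d i j = 0) \<and>
      (\<forall>i\<in>{1..N-1}. \<forall>k\<in>{1..N-1}.
         (\<Sum>j\<in>{1..N-1}. cartan i j * d j k) = (if i = k then 1 else 0)))"

text \<open>Eigenvalue of h_j = E_jj - E_{j+1,j+1} on the basis vector v_c.\<close>
definition h_eig :: "nat \<Rightarrow> nat \<Rightarrow> real" where
  "h_eig j c = (if c = j then 1 else 0) - (if c = j + 1 then 1 else 0)"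

text \<open>Eigenvalue of h^vee_i = sum_j d_ij h_j on v_c.\<close>
definition hvee_eig :: "nat \<Rightarrow> nat \<Rightarrow> nat \<Rightarrow> real" where
  "hvee_eig N i c = (\<Sum>j\<in>{1..N-1}. cartan_inv N i j * h_eig j c)"

text \<open>s + h^vee evaluated on v_c: replace s_i by s_i + (eigenvalue of h^vee_i on v_c).\<close>
definition shift :: "nat \<Rightarrow> (nat \<Rightarrow> complex) \<Rightarrow> nat \<Rightarrow> (nat \<Rightarrow> complex)" where
  "shift N s c = (\<lambda>i. s i + complex_of_real (hvee_eig N i c))"

definition sext :: "nat \<Rightarrow> (nat \<Rightarrow> complex) \<Rightarrow> nat \<Rightarrow> complex" where
  "sext N s a = (if 1 \<le> a \<and> a \<le> N - 1 then s a else 0)"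

definition xcoord :: "nat \<Rightarrow> (nat \<Rightarrow> complex) \<Rightarrow> nat \<Rightarrow> complex" where
  "xcoord N s a = 2 * sext N s a - 2 * sext N s (a - 1)"

text \<open>Genericity: all denominators x_a - x_b (a /= b) occurring, at s and at all
  shifted points s + h^vee(v_c), are nonzero.\<close>
definition generic :: "nat \<Rightarrow> (nat \<Rightarrow> complex) \<Rightarrow> bool" where
  "generic N s = (\<forall>t \<in> insert s (shift N s ` {1..N}). \<forall>a\<in>{1..N}. \<forall>b\<in>{1..N}.
       a \<noteq> b \<longrightarrow> xcoord N t a \<noteq> xcoord N t b)"

type_synonym op2 = "nat \<times> nat \<Rightarrow> nat \<times> nat \<Rightarrow> complex"
type_synonym op3 = "nat \<times> nat \<times> nat \<Rightarrow> nat \<times> nat \<times> nat \<Rightarrow> complex"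

definition elem :: "nat \<Rightarrow> nat \<Rightarrow> nat \<Rightarrow> nat \<Rightarrow> complex" where
  "elem a b i j = (if i = a \<and> j = b then 1 else 0)"

definition idx2 :: "nat \<Rightarrow> (nat \<times> nat) set" where
  "idx2 N = {1..N} \<times> {1..N}"

definition idx3 :: "nat \<Rightarrow> (nat \<times> nat \<times> nat) set" where
  "idx3 N = {1..N} \<times> {1..N} \<times> {1..N}"

definition mult2 :: "nat \<Rightarrow> op2 \<Rightarrow> op2 \<Rightarrow> op2" where
  "mult2 N A B = (\<lambda>i j. \<Sum>k\<in>idx2 N. A i k * B k j)"

definition mult3 :: "nat \<Rightarrow> op3 \<Rightarrow> op3 \<Rightarrow> op3" where
  "mult3 N A B = (\<lambda>i j. \<Sum>k\<in>idx3 N. A i k * B k j)"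

definition one2 :: op2 where
  "one2 = (\<lambda>i j. if i = j then 1 else 0)"

definition inv2 :: "nat \<Rightarrow> op2 \<Rightarrow> op2" where
  "inv2 N A = (THE B. (\<forall>i j. (i \<notin> idx2 N \<or> j \<notin> idx2 N) \<longrightarrow> B i j = 0) \<and>
      (\<forall>i\<in>idx2 N. \<forall>j\<in>idx2 N. mult2 N A B i j = one2 i j \<and> mult2 N B A i j = one2 i j))"

definition perm2 :: op2 where
  "perm2 = (\<lambda>(i1, i2) (j1, j2). if i1 = j2 \<and> i2 = j1 then 1 else 0)"

definition Fmat :: "nat \<Rightarrow> (nat \<Rightarrow> complex) \<Rightarrow> op2" where
  "Fmat N s = (\<lambda>(i1, i2) (j1, j2).
      one2 (i1, i2) (j1, j2)
      - (\<Sum>a\<in>{1..N}. \<Sum>b\<in>{a<..N}.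
           2 / (xcoord N s a - xcoord N s b) * elem a b i1 j1 * elem b a i2 j2))"

definition Rmat :: "nat \<Rightarrow> (nat \<Rightarrow> complex) \<Rightarrow> op2" where
  "Rmat N s = mult2 N (mult2 N perm2 (mult2 N (Fmat N s) perm2)) (inv2 N (Fmat N s))"

definition R12_sh3 :: "nat \<Rightarrow> (nat \<Rightarrow> complex) \<Rightarrow> op3" where
  "R12_sh3 N s = (\<lambda>(i1, i2, i3) (j1, j2, j3).
      if i3 = j3 then Rmat N (shift N s i3) (i1, i2) (j1, j2) else 0)"

definition R13_sh2 :: "nat \<Rightarrow> (nat \<Rightarrow> complex) \<Rightarrow> op3" where
  "R13_sh2 N s = (\<lambda>(i1, i2, i3) (j1, j2, j3).
      if i2 = j2 then Rmat N (shift N s i2) (i1, i3) (j1, j3) else 0)"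

definition R23_sh1 :: "nat \<Rightarrow> (nat \<Rightarrow> complex) \<Rightarrow> op3" where
  "R23_sh1 N s = (\<lambda>(i1, i2, i3) (j1, j2, j3).
      if i1 = j1 then Rmat N (shift N s i1) (i2, i3) (j2, j3) else 0)"

definition R12 :: "nat \<Rightarrow> (nat \<Rightarrow> complex) \<Rightarrow> op3" where
  "R12 N s = (\<lambda>(i1, i2, i3) (j1, j2, j3).
      if i3 = j3 then Rmat N s (i1, i2) (j1, j2) else 0)"

definition R13 :: "nat \<Rightarrow> (nat \<Rightarrow> complex) \<Rightarrow> op3" where
  "R13 N s = (\<lambda>(i1, i2, i3) (j1, j2, j3).
      if i2 = j2 then Rmat N s (i1, i3) (j1, j3) else 0)"

definition R23 :: "nat \<Rightarrow> (nat \<Rightarrow> complex) \<Rightarrow> op3" where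
  "R23 N s = (\<lambda>(i1, i2, i3) (j1, j2, j3).
      if i1 = j1 then Rmat N s (i2, i3) (j2, j3) else 0)"

end

theory Submission
  imports Defs
begin

text \<open>
  The twist is \<open>F = 1 - n\<close> with \<open>n\<^sup>2 = 0\<close>, since \<open>(E\<^sub>a\<^sub>b \<otimes> E\<^sub>b\<^sub>a)(E\<^sub>c\<^sub>d \<otimes> E\<^sub>d\<^sub>c) = 0\<close>
  whenever \<open>a < b\<close> and \<open>c < d\<close>; hence \<open>F\<^sup>-\<^sup>1 = 1 + n\<close>, and \<open>R = F\<^sub>2\<^sub>1 F\<^sup>-\<^sup>1\<close> is computed
  row by row: the row \<open>(i\<^sub>1, i\<^sub>2)\<close> of every operator involved is supported on
  \<open>(i\<^sub>1, i\<^sub>2)\<close> and \<open>(i\<^sub>2, i\<^sub>1)\<close>.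

  The inverse Cartan matrix of \<open>sl\<^sub>N\<close> is \<open>d\<^sub>i\<^sub>j = min i j - i j / N\<close>, so shifting \<open>s\<close> by
  \<open>h\<^sup>\<or>\<close> evaluated on \<open>v\<^sub>c\<close> raises \<open>x\<^sub>c\<close> by 2 and translates all \<open>x\<^sub>a\<close> by \<open>-2/N\<close>.
  Since \<open>R\<close> only depends on the differences \<open>x\<^sub>a - x\<^sub>b\<close>, every factor of the
  dynamical Yang--Baxter equation is the same R-matrix evaluated at coordinates
  that depend on the spectator index. On the row \<open>(a, b, c)\<close> both sides involve only
  \<open>x\<^sub>a, x\<^sub>b, x\<^sub>c\<close> and are supported on the permutations of \<open>(a, b, c)\<close>, so the
  equation reduces to finitely many rational identities, one for each relative order
  of \<open>a, b, c\<close> and each target.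
\<close>

section \<open>The dynamical shift\<close>

definition cartan_inv_closed :: "nat \<Rightarrow> nat \<Rightarrow> nat \<Rightarrow> real" where
  "cartan_inv_closed N i j =
     (if i \<in> {1..N-1} \<and> j \<in> {1..N-1} then real (min i j) - real i * real j / real N else 0)"

lemma cartan_row_sum:
  assumes "i \<in> {1..N-1}"
  shows "(\<Sum>j\<in>{1..N-1}. cartan i j * g j) =
     2 * g i - (if i + 1 \<le> N - 1 then g (i + 1) else 0) - (if 2 \<le> i then g (i - 1) else 0)"
proof -
  have "(\<Sum>j\<in>{1..N-1}. cartan i j * g j) = (\<Sum>j\<in>{1..N-1}.
      (if j = i then 2 * g i else 0) - (if j = i + 1 then g (i + 1) else 0)
      - (if 2 \<le> i then (if j = i - 1 then g (i - 1) else 0) else 0))"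
    by (rule sum.cong) (auto simp: cartan_def)
  also have "\<dots> = (\<Sum>j\<in>{1..N-1}. if j = i then 2 * g i else 0)
      - (\<Sum>j\<in>{1..N-1}. if j = i + 1 then g (i + 1) else 0)
      - (\<Sum>j\<in>{1..N-1}. if 2 \<le> i then (if j = i - 1 then g (i - 1) else 0) else 0)"
    by (simp add: sum_subtractf)
  also have "\<dots> = 2 * g i - (if i + 1 \<le> N - 1 then g (i + 1) else 0) - (if 2 \<le> i then g (i - 1) else 0)"
    using assms by (auto simp: sum.delta')
  finally show ?thesis .
qed

lemma cartan_mult_cartan_inv_closed:
  assumes i: "i \<in> {1..N-1}" and k: "k \<in> {1..N-1}"
  shows "(\<Sum>j\<in>{1..N-1}. cartan i j * cartan_inv_closed N j k) = (if i = k then 1 else 0)"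
proof -
  define d where "d j = real (min j k) - real j * real k / real N" for j
  have "(if i + 1 \<le> N - 1 then cartan_inv_closed N (i + 1) k else 0) = d (i + 1)"
  proof (cases "i + 1 \<le> N - 1")
    case False
    then have "N = i + 1" using i by auto
    then show ?thesis using k by (auto simp: d_def min_def)
  qed (use i k in \<open>simp add: cartan_inv_closed_def d_def\<close>)
  moreover have "(if 2 \<le> i then cartan_inv_closed N (i - 1) k else 0) = d (i - 1)"
    using i k by (auto simp: cartan_inv_closed_def d_def)
  moreover have "cartan_inv_closed N i k = d i"
    using i k by (simp add: cartan_inv_closed_def d_def)
  moreover have "2 * d i - d (i + 1) - d (i - 1) = 2 * real (min i k) - real (min (i + 1) k) - real (min (i - 1) k)"
    using i k by (simp add: d_def of_nat_diff divide_simps) (simp add: algebra_simps)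
  moreover have "\<dots> = (if i = k then 1 else 0)"
    using i k by (auto simp: min_def of_nat_diff)
  ultimately show ?thesis
    using cartan_row_sum[OF i] by simp
qed

lemma cartan_inv_eq: "cartan_inv N = cartan_inv_closed N"
  unfolding cartan_inv_def
proof (rule the_equality)
  show "(\<forall>i j. (i \<notin> {1..N-1} \<or> j \<notin> {1..N-1}) \<longrightarrow> cartan_inv_closed N i j = 0) \<and>
      (\<forall>i\<in>{1..N-1}. \<forall>k\<in>{1..N-1}.
         (\<Sum>j\<in>{1..N-1}. cartan i j * cartan_inv_closed N j k) = (if i = k then 1 else 0))"
    using cartan_mult_cartan_inv_closed by (auto simp: cartan_inv_closed_def)
next
  fix d
  assume "(\<forall>i j. (i \<notin> {1..N-1} \<or> j \<notin> {1..N-1}) \<longrightarrow> d i j = 0) \<and>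
      (\<forall>i\<in>{1..N-1}. \<forall>k\<in>{1..N-1}. (\<Sum>j\<in>{1..N-1}. cartan i j * d j k) = (if i = k then 1 else 0))"
  then have zero: "\<And>i j. i \<notin> {1..N-1} \<or> j \<notin> {1..N-1} \<Longrightarrow> d i j = 0"
    and right_inv: "\<And>i k. i \<in> {1..N-1} \<Longrightarrow> k \<in> {1..N-1} \<Longrightarrow>
        (\<Sum>l\<in>{1..N-1}. cartan i l * d l k) = (if i = k then 1 else 0)"
    by blast+
  let ?D = "cartan_inv_closed N"
  have left_inv: "(\<Sum>i\<in>{1..N-1}. ?D j i * cartan i l) = (if l = j then 1 else 0)"
    if "j \<in> {1..N-1}" "l \<in> {1..N-1}" for j l
  proof -
    have "(\<Sum>i\<in>{1..N-1}. ?D j i * cartan i l) = (\<Sum>i\<in>{1..N-1}. cartan l i * ?D i j)"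
      by (rule sum.cong) (auto simp: cartan_inv_closed_def cartan_def min.commute mult.commute)
    then show ?thesis using cartan_mult_cartan_inv_closed that by simp
  qed
  show "d = ?D"
  proof (intro ext)
    fix j k
    show "d j k = ?D j k"
    proof (cases "j \<in> {1..N-1} \<and> k \<in> {1..N-1}")
      case False
      then show ?thesis using zero by (auto simp: cartan_inv_closed_def)
    next
      case True
      have "d j k = (\<Sum>l\<in>{1..N-1}. if l = j then d l k else 0)"
        using True by simp
      also have "\<dots> = (\<Sum>l\<in>{1..N-1}. (\<Sum>i\<in>{1..N-1}. ?D j i * cartan i l) * d l k)"
        using left_inv[of j] True by (intro sum.cong) auto
      also have "\<dots> = (\<Sum>i\<in>{1..N-1}. ?D j i * (\<Sum>l\<in>{1..N-1}. cartan i l * d l k))"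
        by (simp add: sum_distrib_left sum_distrib_right mult.assoc) (rule sum.swap)
      also have "\<dots> = (\<Sum>i\<in>{1..N-1}. if i = k then ?D j i else 0)"
        using right_inv[of _ k] True by (intro sum.cong) auto
      also have "\<dots> = ?D j k"
        using True by simp
      finally show ?thesis .
    qed
  qed
qed

lemma hvee_eig_eq:
  assumes i: "i \<in> {1..N-1}" and c: "c \<in> {1..N}"
  shows "hvee_eig N i c = (if c \<le> i then 1 else 0) - real i / real N"
proof -
  have "hvee_eig N i c = (\<Sum>j\<in>{1..N-1}.
      (if j = c then cartan_inv_closed N i j else 0) - (if j = c - 1 then cartan_inv_closed N i j else 0))"
    unfolding hvee_eig_def cartan_inv_eq using c
    by (intro sum.cong) (auto simp: h_eig_def)
  also have "\<dots> = cartan_inv_closed N i c - cartan_inv_closed N i (c - 1)"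
    using c by (simp add: sum_subtractf sum.delta') (auto simp: cartan_inv_closed_def)
  also have "\<dots> = (if c \<le> i then 1 else 0) - real i / real N"
    using i c by (cases "c = 1")
      (auto simp: cartan_inv_closed_def min_def of_nat_diff divide_simps algebra_simps)
  finally show ?thesis .
qed

definition bump :: "(nat \<Rightarrow> complex) \<Rightarrow> nat \<Rightarrow> nat \<Rightarrow> complex" where
  "bump x c p = x p + (if p = c then 2 else 0)"

lemma xcoord_shift:
  assumes N: "N \<ge> 2" and a: "a \<in> {1..N}" and c: "c \<in> {1..N}"
  shows "xcoord N (shift N s c) a = bump (xcoord N s) c a - 2 / of_nat N"
proof -
  define e where "e p = (if 1 \<le> p \<and> p \<le> N - 1
      then complex_of_real ((if c \<le> p then 1 else 0) - real p / real N) else 0)" for p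
  have "sext N (shift N s c) p = sext N s p + e p" for p
    using c by (auto simp: sext_def shift_def e_def hvee_eig_eq)
  then have "xcoord N (shift N s c) a = xcoord N s a + 2 * e a - 2 * e (a - 1)"
    by (simp add: xcoord_def algebra_simps)
  moreover have "2 * e a - 2 * e (a - 1) = (if a = c then 2 else 0) - 2 / of_nat N"
  proof -
    consider "a = 1" | "a = N" | "1 < a \<and> a < N" using a N by force
    then show ?thesis
      by cases (use N c in \<open>auto simp: e_def divide_simps of_nat_diff\<close>)
  qed
  ultimately show ?thesis by (simp add: bump_def)
qed

lemma generic_xcoord:
  assumes N: "N \<ge> 2" and g: "generic N s"
    and p: "p \<in> {1..N}" and q: "q \<in> {1..N}" and "p \<noteq> q"
  shows "xcoord N s p \<noteq> xcoord N s q" and "xcoord N s p + 2 \<noteq> xcoord N s q"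
proof -
  show "xcoord N s p \<noteq> xcoord N s q"
    using g p q \<open>p \<noteq> q\<close> unfolding generic_def by blast
  have "xcoord N (shift N s p) p \<noteq> xcoord N (shift N s p) q"
    using g p q \<open>p \<noteq> q\<close> unfolding generic_def by blast
  then show "xcoord N s p + 2 \<noteq> xcoord N s q"
    unfolding xcoord_shift[OF N p p] xcoord_shift[OF N q p] bump_def using \<open>p \<noteq> q\<close> by simp
qed

section \<open>Operators with sparse rows\<close>

definition two_point :: "'a \<Rightarrow> 'b \<Rightarrow> 'a \<Rightarrow> 'b \<Rightarrow> 'a \<Rightarrow> 'b::monoid_add" where
  "two_point p \<alpha> q \<beta> k = (if k = p then \<alpha> else 0) + (if k = q then \<beta> else 0)"

lemma sum_two_point_mult:
  fixes B :: "'a \<Rightarrow> 'b::semiring_0"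
  assumes "finite S" "p \<in> S" "q \<in> S"
  shows "(\<Sum>k\<in>S. two_point p \<alpha> q \<beta> k * B k) = \<alpha> * B p + \<beta> * B q"
proof -
  have "(\<Sum>k\<in>S. two_point p \<alpha> q \<beta> k * B k)
      = (\<Sum>k\<in>S. (if k = p then \<alpha> * B k else 0) + (if k = q then \<beta> * B k else 0))"
    by (intro sum.cong) (simp_all add: two_point_def distrib_right)
  also have "\<dots> = \<alpha> * B p + \<beta> * B q"
    using assms by (simp add: sum.distrib)
  finally show ?thesis .
qed

lemma mult2_two_point:
  assumes "A i = two_point p \<alpha> q \<beta>" "p \<in> idx2 N" "q \<in> idx2 N"
  shows "mult2 N A B i j = \<alpha> * B p j + \<beta> * B q j"
  using assms by (simp add: mult2_def sum_two_point_mult idx2_def)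

lemma mult3_two_point:
  assumes "A i = two_point p \<alpha> q \<beta>" "p \<in> idx3 N" "q \<in> idx3 N"
  shows "mult3 N A B i j = \<alpha> * B p j + \<beta> * B q j"
  using assms by (simp add: mult3_def sum_two_point_mult idx3_def)

lemma mult2_assoc: "mult2 N (mult2 N A B) C = mult2 N A (mult2 N B C)"
proof (intro ext)
  fix i j
  have "(\<Sum>k\<in>idx2 N. (\<Sum>l\<in>idx2 N. A i l * B l k) * C k j)
      = (\<Sum>l\<in>idx2 N. \<Sum>k\<in>idx2 N. A i l * B l k * C k j)"
    by (simp add: sum_distrib_right) (rule sum.swap)
  also have "\<dots> = (\<Sum>l\<in>idx2 N. A i l * (\<Sum>k\<in>idx2 N. B l k * C k j))"
    by (simp add: sum_distrib_left mult.assoc)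
  finally show "mult2 N (mult2 N A B) C i j = mult2 N A (mult2 N B C) i j"
    unfolding mult2_def .
qed

lemma mult3_assoc: "mult3 N (mult3 N A B) C = mult3 N A (mult3 N B C)"
proof (intro ext)
  fix i j
  have "(\<Sum>k\<in>idx3 N. (\<Sum>l\<in>idx3 N. A i l * B l k) * C k j)
      = (\<Sum>l\<in>idx3 N. \<Sum>k\<in>idx3 N. A i l * B l k * C k j)"
    by (simp add: sum_distrib_right) (rule sum.swap)
  also have "\<dots> = (\<Sum>l\<in>idx3 N. A i l * (\<Sum>k\<in>idx3 N. B l k * C k j))"
    by (simp add: sum_distrib_left mult.assoc)
  finally show "mult3 N (mult3 N A B) C i j = mult3 N A (mult3 N B C) i j"
    unfolding mult3_def .
qed

lemma mult3_mult3_cong: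
  assumes "i \<in> idx3 N"
    and "\<forall>k\<in>idx3 N. A k = A' k" "\<forall>k\<in>idx3 N. B k = B' k" "\<forall>k\<in>idx3 N. C k = C' k"
  shows "mult3 N (mult3 N A B) C i j = mult3 N (mult3 N A' B') C' i j"
  using assms by (simp add: mult3_def)

lemma finite_idx2 [simp]: "finite (idx2 N)"
  by (simp add: idx2_def)

lemma mult2_one2_right:
  assumes "j \<in> idx2 N"
  shows "mult2 N A one2 i j = A i j"
proof -
  have "(\<Sum>k\<in>idx2 N. A i k * one2 k j) = (\<Sum>k\<in>idx2 N. if k = j then A i k else 0)"
    by (intro sum.cong) (auto simp: one2_def)
  then show ?thesis using assms by (simp add: mult2_def)
qed

lemma mult2_one2_left:
  assumes "i \<in> idx2 N"
  shows "mult2 N one2 A i j = A i j"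
proof -
  have "(\<Sum>k\<in>idx2 N. one2 i k * A k j) = (\<Sum>k\<in>idx2 N. if k = i then A k j else 0)"
    by (intro sum.cong) (auto simp: one2_def)
  then show ?thesis using assms by (simp add: mult2_def)
qed

lemma inv2_eqI:
  assumes B_zero: "\<And>i j. i \<notin> idx2 N \<or> j \<notin> idx2 N \<Longrightarrow> B i j = 0"
    and AB: "\<And>i j. i \<in> idx2 N \<Longrightarrow> j \<in> idx2 N \<Longrightarrow> mult2 N A B i j = one2 i j"
    and BA: "\<And>i j. i \<in> idx2 N \<Longrightarrow> j \<in> idx2 N \<Longrightarrow> mult2 N B A i j = one2 i j"
  shows "inv2 N A = B"
  unfolding inv2_def
proof (rule the_equality)
  fix C
  assume C: "(\<forall>i j. (i \<notin> idx2 N \<or> j \<notin> idx2 N) \<longrightarrow> C i j = 0) \<and>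
      (\<forall>i\<in>idx2 N. \<forall>j\<in>idx2 N. mult2 N A C i j = one2 i j \<and> mult2 N C A i j = one2 i j)"
  show "C = B"
  proof (intro ext)
    fix i j
    show "C i j = B i j"
    proof (cases "i \<in> idx2 N \<and> j \<in> idx2 N")
      case True
      have "C i j = mult2 N C one2 i j"
        using True by (simp add: mult2_one2_right)
      also have "\<dots> = mult2 N C (mult2 N A B) i j"
        using True AB by (simp add: mult2_def[of N C])
      also have "\<dots> = mult2 N (mult2 N C A) B i j"
        by (simp add: mult2_assoc)
      also have "\<dots> = mult2 N one2 B i j"
        using True C by (simp add: mult2_def[of N _ B])
      also have "\<dots> = B i j"
        using True by (simp add: mult2_one2_left)
      finally show ?thesis .
    next
      case False
      then have "i \<notin> idx2 N \<or> j \<notin> idx2 N" by blast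
      then have "B i j = 0" "C i j = 0" using B_zero C by blast+
      then show ?thesis by simp
    qed
  qed
qed (use assms in blast)

section \<open>The twist and the R-matrix\<close>

definition fcoef :: "(nat \<Rightarrow> complex) \<Rightarrow> nat \<Rightarrow> nat \<Rightarrow> complex" where
  "fcoef x p q = (if p < q then 2 / (x p - x q) else 0)"

lemma Fmat_row:
  assumes "(i1, i2) \<in> idx2 N"
  shows "Fmat N s (i1, i2) = two_point (i1, i2) 1 (i2, i1) (- fcoef (xcoord N s) i1 i2)"
proof (intro ext, clarify)
  fix j1 j2
  let ?x = "xcoord N s"
  have "(\<Sum>a\<in>{1..N}. \<Sum>b\<in>{a<..N}. 2 / (?x a - ?x b) * elem a b i1 j1 * elem b a i2 j2)
      = (\<Sum>a\<in>{1..N}. if a = i1 then (\<Sum>b\<in>{a<..N}. if b = i2 then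
           (if (j1, j2) = (i2, i1) then 2 / (?x a - ?x b) else 0) else 0) else 0)"
  proof (intro sum.cong refl)
    fix a
    have "(\<Sum>b\<in>{a<..N}. 2 / (?x a - ?x b) * elem a b i1 j1 * elem b a i2 j2)
        = (\<Sum>b\<in>{a<..N}. if b = i2 then
            (if a = i1 \<and> (j1, j2) = (i2, i1) then 2 / (?x a - ?x b) else 0) else 0)"
      by (intro sum.cong) (simp_all add: elem_def)
    then show "(\<Sum>b\<in>{a<..N}. 2 / (?x a - ?x b) * elem a b i1 j1 * elem b a i2 j2)
        = (if a = i1 then (\<Sum>b\<in>{a<..N}. if b = i2 then
            (if (j1, j2) = (i2, i1) then 2 / (?x a - ?x b) else 0) else 0) else 0)"
      by (cases "a = i1") simp_all
  qed
  also have "\<dots> = (if (j1, j2) = (i2, i1) then fcoef ?x i1 i2 else 0)"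
    using assms by (simp add: idx2_def fcoef_def)
  finally have "Fmat N s (i1, i2) (j1, j2)
      = one2 (i1, i2) (j1, j2) - (if (j1, j2) = (i2, i1) then fcoef ?x i1 i2 else 0)"
    by (simp add: Fmat_def)
  then show "Fmat N s (i1, i2) (j1, j2) = two_point (i1, i2) 1 (i2, i1) (- fcoef ?x i1 i2) (j1, j2)"
    by (cases "i1 = i2") (simp_all add: two_point_def one2_def fcoef_def)
qed

text \<open>On the index range \<open>F\<^sup>-\<^sup>1 = 1 + n = 2 - F\<close>; outside it \<open>inv2\<close> is zero.\<close>

definition Finv :: "nat \<Rightarrow> (nat \<Rightarrow> complex) \<Rightarrow> op2" where
  "Finv N s = (\<lambda>i j. if i \<in> idx2 N \<and> j \<in> idx2 N then 2 * one2 i j - Fmat N s i j else 0)"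

lemma Finv_row:
  assumes i: "(i1, i2) \<in> idx2 N"
  shows "Finv N s (i1, i2) = two_point (i1, i2) 1 (i2, i1) (fcoef (xcoord N s) i1 i2)"
proof (intro ext)
  fix k
  have swap: "(i2, i1) \<in> idx2 N" using i by (auto simp: idx2_def)
  show "Finv N s (i1, i2) k = two_point (i1, i2) 1 (i2, i1) (fcoef (xcoord N s) i1 i2) k"
  proof (cases "k \<in> idx2 N")
    case True
    then have "Finv N s (i1, i2) k = 2 * one2 (i1, i2) k - Fmat N s (i1, i2) k"
      using i by (simp add: Finv_def)
    then show ?thesis
      unfolding Fmat_row[OF i]
      by (cases "i1 = i2") (simp_all add: two_point_def one2_def fcoef_def)
  next
    case False
    then have "k \<noteq> (i1, i2)" "k \<noteq> (i2, i1)" using i swap by auto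
    then show ?thesis using False by (simp add: Finv_def two_point_def)
  qed
qed

lemma mult2_one_plus_swap_inverse:
  fixes c :: "nat \<Rightarrow> nat \<Rightarrow> complex"
  assumes c: "\<And>p q. c p q * c q p = 0"
    and A: "\<And>p q. (p, q) \<in> idx2 N \<Longrightarrow> A (p, q) = two_point (p, q) 1 (q, p) (c p q)"
    and B: "\<And>p q. (p, q) \<in> idx2 N \<Longrightarrow> B (p, q) = two_point (p, q) 1 (q, p) (- c p q)"
    and i: "i \<in> idx2 N"
  shows "mult2 N A B i j = one2 i j"
proof -
  obtain i1 i2 where i_eq: "i = (i1, i2)" by (cases i)
  have i': "(i1, i2) \<in> idx2 N" and swap: "(i2, i1) \<in> idx2 N"
    using i by (auto simp: i_eq idx2_def)
  have "mult2 N A B i j = B (i1, i2) j + c i1 i2 * B (i2, i1) j"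
    using mult2_two_point[where A = A, OF A[OF i'] i' swap] by (simp add: i_eq)
  also have "\<dots> = one2 i j"
    using c[of i1 i2] unfolding B[OF i'] B[OF swap] i_eq
    by (cases "i1 = i2") (simp_all add: two_point_def one2_def algebra_simps)
  finally show ?thesis .
qed

lemma inv2_Fmat: "inv2 N (Fmat N s) = Finv N s"
proof (rule inv2_eqI)
  have c: "fcoef x p q * fcoef x q p = 0" for x p q
    by (simp add: fcoef_def)
  show "mult2 N (Fmat N s) (Finv N s) i j = one2 i j" if "i \<in> idx2 N" for i j
    by (rule mult2_one_plus_swap_inverse[where c = "\<lambda>p q. - fcoef (xcoord N s) p q"])
      (use that c in \<open>simp_all add: Fmat_row Finv_row\<close>)
  show "mult2 N (Finv N s) (Fmat N s) i j = one2 i j" if "i \<in> idx2 N" for i j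
    by (rule mult2_one_plus_swap_inverse[where c = "fcoef (xcoord N s)"])
      (use that c in \<open>simp_all add: Fmat_row Finv_row\<close>)
qed (auto simp: Finv_def)

definition rdiag :: "(nat \<Rightarrow> complex) \<Rightarrow> nat \<Rightarrow> nat \<Rightarrow> complex" where
  "rdiag x p q = 1 - (fcoef x q p)\<^sup>2"

definition rswap :: "(nat \<Rightarrow> complex) \<Rightarrow> nat \<Rightarrow> nat \<Rightarrow> complex" where
  "rswap x p q = fcoef x p q - fcoef x q p"

definition R_coord :: "(nat \<Rightarrow> complex) \<Rightarrow> nat \<times> nat \<Rightarrow> nat \<times> nat \<Rightarrow> complex" where
  "R_coord x = (\<lambda>(p, q). two_point (p, q) (rdiag x p q) (q, p) (rswap x p q))"

lemma rswap_eq: "rswap x p q = (if p = q then 0 else 2 / (x p - x q))"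
proof (cases p q rule: linorder_cases)
  case greater
  have "x q - x p = - (x p - x q)" by simp
  then have "2 / (x q - x p) = - (2 / (x p - x q))" by (simp only: divide_minus_right)
  then show ?thesis using greater by (simp add: rswap_def fcoef_def)
qed (simp_all add: rswap_def fcoef_def)

lemma rdiag_eq: "rdiag x p q = (if q < p then 1 - 4 / (x p - x q)\<^sup>2 else 1)"
proof -
  have "(2 / (x q - x p))\<^sup>2 = 4 / (x p - x q)\<^sup>2"
    by (simp add: power_divide power2_commute)
  then show ?thesis by (simp add: rdiag_def fcoef_def)
qed

lemma perm2_row: "perm2 (i1, i2) = two_point (i1, i2) 0 (i2, i1) 1"
  by (auto simp: perm2_def two_point_def)

lemma Rmat_row:
  assumes i: "(i1, i2) \<in> idx2 N"
  shows "Rmat N s (i1, i2) = R_coord (xcoord N s) (i1, i2)"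
proof (intro ext)
  fix j
  let ?x = "xcoord N s"
  have swap: "(i2, i1) \<in> idx2 N" using i by (auto simp: idx2_def)
  have F21_row: "mult2 N perm2 (mult2 N (Fmat N s) perm2) (i1, i2)
      = two_point (i1, i2) 1 (i2, i1) (- fcoef ?x i2 i1)"
  proof (intro ext)
    fix k
    have "mult2 N perm2 (mult2 N (Fmat N s) perm2) (i1, i2) k = mult2 N (Fmat N s) perm2 (i2, i1) k"
      using mult2_two_point[where A = perm2, OF perm2_row i swap] by simp
    also have "\<dots> = perm2 (i2, i1) k - fcoef ?x i2 i1 * perm2 (i1, i2) k"
      using mult2_two_point[where A = "Fmat N s", OF Fmat_row[OF swap] swap i] by simp
    finally show "mult2 N perm2 (mult2 N (Fmat N s) perm2) (i1, i2) k
        = two_point (i1, i2) 1 (i2, i1) (- fcoef ?x i2 i1) k"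
      by (cases "i1 = i2") (simp_all add: perm2_row two_point_def fcoef_def)
  qed
  have "Rmat N s (i1, i2) j = Finv N s (i1, i2) j - fcoef ?x i2 i1 * Finv N s (i2, i1) j"
    unfolding Rmat_def inv2_Fmat
    using mult2_two_point[where A = "mult2 N perm2 (mult2 N (Fmat N s) perm2)", OF F21_row i swap]
    by simp
  also have "\<dots> = R_coord ?x (i1, i2) j"
    unfolding Finv_row[OF i] Finv_row[OF swap] R_coord_def rdiag_def rswap_def
    by (cases "i1 = i2") (simp_all add: two_point_def fcoef_def power2_eq_square algebra_simps)
  finally show "Rmat N s (i1, i2) j = R_coord ?x (i1, i2) j" .
qed

lemma Rmat_entry:
  assumes "i1 \<in> {1..N}" "i2 \<in> {1..N}" "j1 \<in> {1..N}" "j2 \<in> {1..N}"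
  shows "Rmat N s (i1, i2) (j1, j2) =
    (if i1 = i2 \<and> j1 = i1 \<and> j2 = i1 then 1
     else if i1 \<noteq> i2 \<and> j1 = i1 \<and> j2 = i2 then
       (if i2 > i1 then 1 else 1 - 4 / (xcoord N s i1 - xcoord N s i2)\<^sup>2)
     else if i1 \<noteq> i2 \<and> j1 = i2 \<and> j2 = i1 then 2 / (xcoord N s i1 - xcoord N s i2)
     else 0)"
proof -
  have "(xcoord N s i2 - xcoord N s i1)\<^sup>2 = (xcoord N s i1 - xcoord N s i2)\<^sup>2"
    by (simp add: power2_commute)
  then show ?thesis
    using assms
    by (auto simp: Rmat_row idx2_def R_coord_def rdiag_def rswap_def fcoef_def two_point_def
        power_divide divide_simps)
qed

lemma R_coord_translate:
  assumes "y p = x p + t" "y q = x q + t"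
  shows "R_coord y (p, q) = R_coord x (p, q)"
  using assms by (simp add: R_coord_def rdiag_eq rswap_eq)

lemma Rmat_shift_row:
  assumes N: "N \<ge> 2" and c: "c \<in> {1..N}" and i: "(i1, i2) \<in> idx2 N"
  shows "Rmat N (shift N s c) (i1, i2) = R_coord (bump (xcoord N s) c) (i1, i2)"
proof -
  have "i1 \<in> {1..N}" "i2 \<in> {1..N}" using i by (auto simp: idx2_def)
  then show ?thesis
    unfolding Rmat_row[OF i]
    by (intro R_coord_translate) (simp_all add: xcoord_shift[OF N _ c])
qed

section \<open>The dynamical Yang--Baxter equation\<close>

text \<open>\<open>y c\<close> are the coordinates at which the R-matrix acts when the spectator factor is
  in state \<open>v\<^sub>c\<close>: \<open>\<lambda>_. x\<close> gives the constant factor, \<open>bump x\<close> the shifted one.\<close>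

definition dyn_R12 :: "(nat \<Rightarrow> nat \<Rightarrow> complex) \<Rightarrow> op3" where
  "dyn_R12 y = (\<lambda>(i1, i2, i3) (j1, j2, j3). if i3 = j3 then R_coord (y i3) (i1, i2) (j1, j2) else 0)"

definition dyn_R13 :: "(nat \<Rightarrow> nat \<Rightarrow> complex) \<Rightarrow> op3" where
  "dyn_R13 y = (\<lambda>(i1, i2, i3) (j1, j2, j3). if i2 = j2 then R_coord (y i2) (i1, i3) (j1, j3) else 0)"

definition dyn_R23 :: "(nat \<Rightarrow> nat \<Rightarrow> complex) \<Rightarrow> op3" where
  "dyn_R23 y = (\<lambda>(i1, i2, i3) (j1, j2, j3). if i1 = j1 then R_coord (y i1) (i2, i3) (j2, j3) else 0)"

lemma dyn_R12_row:
  "dyn_R12 y (i1, i2, i3) = two_point (i1, i2, i3) (rdiag (y i3) i1 i2) (i2, i1, i3) (rswap (y i3) i1 i2)"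
  by (intro ext) (simp add: dyn_R12_def R_coord_def two_point_def split: prod.split)

lemma dyn_R13_row:
  "dyn_R13 y (i1, i2, i3) = two_point (i1, i2, i3) (rdiag (y i2) i1 i3) (i3, i2, i1) (rswap (y i2) i1 i3)"
  by (intro ext) (simp add: dyn_R13_def R_coord_def two_point_def split: prod.split)

lemma dyn_R23_row:
  "dyn_R23 y (i1, i2, i3) = two_point (i1, i2, i3) (rdiag (y i1) i2 i3) (i1, i3, i2) (rswap (y i1) i2 i3)"
  by (intro ext) (simp add: dyn_R23_def R_coord_def two_point_def split: prod.split)

lemma mult3_dyn_R12:
  "(i1, i2, i3) \<in> idx3 N \<Longrightarrow> mult3 N (dyn_R12 y) B (i1, i2, i3) j =
     rdiag (y i3) i1 i2 * B (i1, i2, i3) j + rswap (y i3) i1 i2 * B (i2, i1, i3) j"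
  by (rule mult3_two_point[where A = "dyn_R12 y", OF dyn_R12_row]) (auto simp: idx3_def)

lemma mult3_dyn_R13:
  "(i1, i2, i3) \<in> idx3 N \<Longrightarrow> mult3 N (dyn_R13 y) B (i1, i2, i3) j =
     rdiag (y i2) i1 i3 * B (i1, i2, i3) j + rswap (y i2) i1 i3 * B (i3, i2, i1) j"
  by (rule mult3_two_point[where A = "dyn_R13 y", OF dyn_R13_row]) (auto simp: idx3_def)

lemma mult3_dyn_R23:
  "(i1, i2, i3) \<in> idx3 N \<Longrightarrow> mult3 N (dyn_R23 y) B (i1, i2, i3) j =
     rdiag (y i1) i2 i3 * B (i1, i2, i3) j + rswap (y i1) i2 i3 * B (i1, i3, i2) j"
  by (rule mult3_two_point[where A = "dyn_R23 y", OF dyn_R23_row]) (auto simp: idx3_def)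

lemma dyn_R_dybe:
  assumes abc: "(a, b, c) \<in> idx3 N"
    and gen: "\<And>p q. p \<in> {a, b, c} \<Longrightarrow> q \<in> {a, b, c} \<Longrightarrow> p \<noteq> q \<Longrightarrow> x p \<noteq> x q \<and> x p + 2 \<noteq> x q"
  shows "mult3 N (mult3 N (dyn_R12 (bump x)) (dyn_R13 (\<lambda>_. x))) (dyn_R23 (bump x)) (a, b, c) j =
         mult3 N (mult3 N (dyn_R23 (\<lambda>_. x)) (dyn_R13 (bump x))) (dyn_R12 (\<lambda>_. x)) (a, b, c) j"
proof -
  have "a \<in> {1..N}" "b \<in> {1..N}" "c \<in> {1..N}" using abc by (auto simp: idx3_def)
  then have in_idx3: "(p, q, r) \<in> idx3 N" if "p \<in> {a, b, c}" "q \<in> {a, b, c}" "r \<in> {a, b, c}" for p q r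
    using that by (auto simp: idx3_def)
  have ne: "x p \<noteq> x q" "x p + 2 \<noteq> x q" "x p \<noteq> x q + 2"
      "x p - x q \<noteq> 0" "x p + 2 - x q \<noteq> 0" "x p - (x q + 2) \<noteq> 0"
    if "p \<in> {a, b, c}" "q \<in> {a, b, c}" "p \<noteq> q" for p q
    using gen[OF that] gen[of q p] that by (auto simp: eq_commute[of "x p"])
  have j_cases: "j \<notin> {(a, b, c), (a, c, b), (b, a, c), (b, c, a), (c, a, b), (c, b, a)} \<or>
      j = (a, b, c) \<or> j = (a, c, b) \<or> j = (b, a, c) \<or> j = (b, c, a) \<or> j = (c, a, b) \<or> j = (c, b, a)"
    by blast
  txt \<open>Expand both sides along the sparse rows, then split on the relative order of
    \<open>a, b, c\<close> and on \<open>j\<close>; each case is a rational identity in \<open>x a, x b, x c\<close>.\<close>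
  show ?thesis
    unfolding mult3_assoc
    using j_cases
    by (simp only: mult3_dyn_R12 mult3_dyn_R13 mult3_dyn_R23 in_idx3 insert_iff simp_thms
          dyn_R12_row dyn_R13_row dyn_R23_row two_point_def rdiag_eq rswap_eq bump_def)
      (cases rule: linorder_cases[of a b]; cases rule: linorder_cases[of b c];
        cases rule: linorder_cases[of a c]; elim disjE; hypsubst_thin?;
        simp add: less_imp_neq less_imp_neq[symmetric] less_not_sym ne divide_simps; algebra)
qed

lemma R_factors_eq_dyn_R:
  assumes N: "N \<ge> 2" and i: "i \<in> idx3 N"
  shows "R12_sh3 N s i = dyn_R12 (bump (xcoord N s)) i" "R12 N s i = dyn_R12 (\<lambda>_. xcoord N s) i"
    and "R13_sh2 N s i = dyn_R13 (bump (xcoord N s)) i" "R13 N s i = dyn_R13 (\<lambda>_. xcoord N s) i"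
    and "R23_sh1 N s i = dyn_R23 (bump (xcoord N s)) i" "R23 N s i = dyn_R23 (\<lambda>_. xcoord N s) i"
proof -
  obtain i1 i2 i3 where i_eq: "i = (i1, i2, i3)" by (cases i)
  have in_N: "i1 \<in> {1..N}" "i2 \<in> {1..N}" "i3 \<in> {1..N}"
    using i by (auto simp: i_eq idx3_def)
  have in_idx2: "(i1, i2) \<in> idx2 N" "(i1, i3) \<in> idx2 N" "(i2, i3) \<in> idx2 N"
    using in_N by (auto simp: idx2_def)
  show "R12_sh3 N s i = dyn_R12 (bump (xcoord N s)) i"
    by (intro ext) (simp add: i_eq R12_sh3_def dyn_R12_def Rmat_shift_row[OF N in_N(3) in_idx2(1)]
        split: prod.split)
  show "R12 N s i = dyn_R12 (\<lambda>_. xcoord N s) i"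
    by (intro ext) (simp add: i_eq R12_def dyn_R12_def Rmat_row[OF in_idx2(1)] split: prod.split)
  show "R13_sh2 N s i = dyn_R13 (bump (xcoord N s)) i"
    by (intro ext) (simp add: i_eq R13_sh2_def dyn_R13_def Rmat_shift_row[OF N in_N(2) in_idx2(2)]
        split: prod.split)
  show "R13 N s i = dyn_R13 (\<lambda>_. xcoord N s) i"
    by (intro ext) (simp add: i_eq R13_def dyn_R13_def Rmat_row[OF in_idx2(2)] split: prod.split)
  show "R23_sh1 N s i = dyn_R23 (bump (xcoord N s)) i"
    by (intro ext) (simp add: i_eq R23_sh1_def dyn_R23_def Rmat_shift_row[OF N in_N(1) in_idx2(3)]
        split: prod.split)
  show "R23 N s i = dyn_R23 (\<lambda>_. xcoord N s) i"
    by (intro ext) (simp add: i_eq R23_def dyn_R23_def Rmat_row[OF in_idx2(3)] split: prod.split)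
qed

lemma Rmat_dybe:
  assumes N: "N \<ge> 2" and g: "generic N s" and i: "i \<in> idx3 N"
  shows "mult3 N (mult3 N (R12_sh3 N s) (R13 N s)) (R23_sh1 N s) i j =
         mult3 N (mult3 N (R23 N s) (R13_sh2 N s)) (R12 N s) i j"
proof -
  let ?x = "xcoord N s"
  obtain a b c where i_eq: "i = (a, b, c)" by (cases i)
  have gen: "?x p \<noteq> ?x q \<and> ?x p + 2 \<noteq> ?x q"
    if "p \<in> {a, b, c}" "q \<in> {a, b, c}" "p \<noteq> q" for p q
    using generic_xcoord[OF N g _ _ \<open>p \<noteq> q\<close>] that i by (auto simp: i_eq idx3_def)
  have "mult3 N (mult3 N (R12_sh3 N s) (R13 N s)) (R23_sh1 N s) i j =
      mult3 N (mult3 N (dyn_R12 (bump ?x)) (dyn_R13 (\<lambda>_. ?x))) (dyn_R23 (bump ?x)) i j"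
    using i by (intro mult3_mult3_cong) (simp_all add: R_factors_eq_dyn_R[OF N])
  also have "\<dots> = mult3 N (mult3 N (dyn_R23 (\<lambda>_. ?x)) (dyn_R13 (bump ?x))) (dyn_R12 (\<lambda>_. ?x)) i j"
    using i gen unfolding i_eq by (rule dyn_R_dybe)
  also have "\<dots> = mult3 N (mult3 N (R23 N s) (R13_sh2 N s)) (R12 N s) i j"
    using i by (intro mult3_mult3_cong) (simp_all add: R_factors_eq_dyn_R[OF N])
  finally show ?thesis .
qed

theorem mainTheorem1:
  fixes N :: nat and s :: "nat \<Rightarrow> complex"
  assumes "N \<ge> 2" and "generic N s"
  shows "(\<forall>i1\<in>{1..N}. \<forall>i2\<in>{1..N}. \<forall>j1\<in>{1..N}. \<forall>j2\<in>{1..N}.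
            Rmat N s (i1, i2) (j1, j2) =
              (if i1 = i2 \<and> j1 = i1 \<and> j2 = i1 then 1
               else if i1 \<noteq> i2 \<and> j1 = i1 \<and> j2 = i2 then
                 (if i2 > i1 then 1 else 1 - 4 / (xcoord N s i1 - xcoord N s i2)\<^sup>2)
               else if i1 \<noteq> i2 \<and> j1 = i2 \<and> j2 = i1 then
                 2 / (xcoord N s i1 - xcoord N s i2)
               else 0))
       \<and> (\<forall>i\<in>idx3 N. \<forall>j\<in>idx3 N.
            mult3 N (mult3 N (R12_sh3 N s) (R13 N s)) (R23_sh1 N s) i j =
            mult3 N (mult3 N (R23 N s) (R13_sh2 N s)) (R12 N s) i j)"
  using Rmat_entry Rmat_dybe[OF assms] by blast

end
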